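(* Let $1<p<\infty$ and let $(X,d,\mu)$ be a $K$-regular tree as described in the context. Then $X$ is $p$-parabolic if and only if $\mathrm{Cap}_p(X^n)=0$ for all $n\in\mathbb{N}\cup\{0\}$.
   Context: A $K$-regular tree ($K\ge1$ an integer) is a rooted tree (root $0$) in which every vertex has exactly $K$ children; $X$ is the union of its vertices and edges, each edge an isometric copy of $[0,1]$. $|x|$ is the graph distance from $0$ to $x$, $[y,z]$ the unique geodesic between $y,z$. Let $\lambda,\mu:[0,\infty)\to(0,\infty)$ be locally integrable with $\lambda^p\mu^{-1}\in L^{1/(p-1)}_{\mathrm{loc}}([0,\infty))$; $d\mu(x)=\mu(|x|)\,d|x|$, $d(y,z)=\int_{[y,z]}\lambda(|x|)\,d|x|$ ($d|x|$ gives each edge Lebesgue measure $1$), $ds=\lambda(|x|)\,d|x|$. $X^n=\{x:|x|\le n\}$. An upper gradient of $u$ is a Borel $g\ge0$ with $|u(y)-u(z)|\le\int_{[y,z]}g\,ds$ for all $y,z$; $N^{1,p}(X)$ is the space of $u$ with finite $\|u\|_{L^p(X)}+\inf_g\|g\|_{L^p(X)}$; $g_u$ is the minimal upper gradient; $N^{1,p}_0(X)$ is the closure in $N^{1,p}(X)$ of compactly supported functions. $\mathrm{Cap}_p(O)=\inf\{\int_Xg_u^p\,d\mu:u\in N^{1,p}_0(X),u\equiv1\text{ on }O\}$. $X$ is $p$-parabolic if $\mathrm{Cap}_p(O)=0$ for every compact $O\subset(X,d)$. *)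

theory Defs
  imports "HOL-Analysis.Analysis" "HOL-Library.Sublist"
begin

(* A vertex is a list of child indices (< K); the root is [].
   A point is a pair (v,t): for v \<noteq> [] it is the point on the edge from the parent of v to v
   at graph distance t \<in> (0,1] from the parent (t = 1 is the vertex v itself).
   The root is encoded as ([],1). *)
type_synonym pt = "nat list \<times> real"

definition tree_pts :: "nat \<Rightarrow> pt set" where
  "tree_pts K = {(v,t). set v \<subseteq> {..<K} \<and> 0 < t \<and> t \<le> 1 \<and> (v = [] \<longrightarrow> t = 1)}"

definition tree_root :: pt where "tree_root = ([], 1)"

(* non-root vertices, i.e. (lower endpoints of) edges *)
definition tree_edges :: "nat \<Rightarrow> nat list set" where
  "tree_edges K = {v. set v \<subseteq> {..<K} \<and> v \<noteq> []}"

definition height :: "pt \<Rightarrow> real" where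
  "height x = real (length (fst x)) - 1 + snd x"

definition on_root_path :: "pt \<Rightarrow> pt \<Rightarrow> bool" where
  "on_root_path x y \<longleftrightarrow> fst x = [] \<or> (prefix (fst x) (fst y) \<and> (fst x = fst y \<longrightarrow> snd x \<le> snd y))"

definition root_geod :: "nat \<Rightarrow> pt \<Rightarrow> pt set" where
  "root_geod K y = {x \<in> tree_pts K. on_root_path x y}"

definition geod :: "nat \<Rightarrow> pt \<Rightarrow> pt \<Rightarrow> pt set" where
  "geod K y z = (root_geod K y - root_geod K z) \<union> (root_geod K z - root_geod K y)
      \<union> {m \<in> root_geod K y \<inter> root_geod K z. \<forall>x \<in> root_geod K y \<inter> root_geod K z. on_root_path x m}"

(* integral over S with respect to d|x| (Lebesgue measure 1 on each edge) *)
definition line_int :: "nat \<Rightarrow> (pt \<Rightarrow> ennreal) \<Rightarrow> pt set \<Rightarrow> ennreal" where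
  "line_int K f S = (\<integral>\<^sup>+ v. (\<integral>\<^sup>+ t. f (v,t) * indicator S (v,t) * indicator {0<..1} t \<partial>lborel)
                        \<partial>count_space (tree_edges K))"

definition tree_dist :: "nat \<Rightarrow> (real \<Rightarrow> real) \<Rightarrow> pt \<Rightarrow> pt \<Rightarrow> real" where
  "tree_dist K lam y z = enn2real (line_int K (\<lambda>x. ennreal (lam (height x))) (geod K y z))"

definition tree_top :: "nat \<Rightarrow> (real \<Rightarrow> real) \<Rightarrow> pt topology" where
  "tree_top K lam = Metric_space.mtopology (tree_pts K) (tree_dist K lam)"

(* Borel measurability on X (X is a countable union of edges) *)
definition edge_borel :: "nat \<Rightarrow> (pt \<Rightarrow> real) \<Rightarrow> bool" where
  "edge_borel K f \<longleftrightarrow> (\<forall>v \<in> tree_edges K. (\<lambda>t. f (v,t)) \<in> borel_measurable (restrict_space borel {0<..1}))"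

definition lp_int :: "nat \<Rightarrow> (real \<Rightarrow> real) \<Rightarrow> real \<Rightarrow> (pt \<Rightarrow> real) \<Rightarrow> ennreal" where
  "lp_int K mu p f = line_int K (\<lambda>x. ennreal (\<bar>f x\<bar> powr p * mu (height x))) (tree_pts K)"

definition lp_norm :: "nat \<Rightarrow> (real \<Rightarrow> real) \<Rightarrow> real \<Rightarrow> (pt \<Rightarrow> real) \<Rightarrow> real" where
  "lp_norm K mu p f = enn2real (lp_int K mu p f) powr (1 / p)"

definition upper_gradient :: "nat \<Rightarrow> (real \<Rightarrow> real) \<Rightarrow> (pt \<Rightarrow> real) \<Rightarrow> (pt \<Rightarrow> real) \<Rightarrow> bool" where
  "upper_gradient K lam u g \<longleftrightarrow> (\<forall>x. 0 \<le> g x) \<and> edge_borel K g \<and>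
     (\<forall>y \<in> tree_pts K. \<forall>z \<in> tree_pts K.
        ennreal \<bar>u y - u z\<bar> \<le> line_int K (\<lambda>x. ennreal (g x * lam (height x))) (geod K y z))"

definition N1p :: "nat \<Rightarrow> (real \<Rightarrow> real) \<Rightarrow> (real \<Rightarrow> real) \<Rightarrow> real \<Rightarrow> (pt \<Rightarrow> real) \<Rightarrow> bool" where
  "N1p K lam mu p u \<longleftrightarrow> edge_borel K u \<and> lp_int K mu p u < \<infinity> \<and>
     (\<exists>g. upper_gradient K lam u g \<and> lp_int K mu p g < \<infinity>)"

definition compact_support :: "nat \<Rightarrow> (real \<Rightarrow> real) \<Rightarrow> (pt \<Rightarrow> real) \<Rightarrow> bool" where
  "compact_support K lam u \<longleftrightarrow>
     compactin (tree_top K lam) (tree_top K lam closure_of {x \<in> tree_pts K. u x \<noteq> 0})"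

(* closure of compactly supported functions w.r.t. \<parallel>u\<parallel>_Lp + inf_g \<parallel>g\<parallel>_Lp *)
definition N1p0 :: "nat \<Rightarrow> (real \<Rightarrow> real) \<Rightarrow> (real \<Rightarrow> real) \<Rightarrow> real \<Rightarrow> (pt \<Rightarrow> real) \<Rightarrow> bool" where
  "N1p0 K lam mu p u \<longleftrightarrow> N1p K lam mu p u \<and>
     (\<forall>\<epsilon>>0. \<exists>\<phi>. N1p K lam mu p \<phi> \<and> compact_support K lam \<phi> \<and>
        (\<exists>g. upper_gradient K lam (\<lambda>x. u x - \<phi> x) g \<and>
             lp_int K mu p (\<lambda>x. u x - \<phi> x) < \<infinity> \<and> lp_int K mu p g < \<infinity> \<and>
             lp_norm K mu p (\<lambda>x. u x - \<phi> x) + lp_norm K mu p g < \<epsilon>))"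

(* Cap_p(O); \<integral> g_u^p d\<mu> = inf over upper gradients g of u of \<integral> g^p d\<mu> *)
definition capacity :: "nat \<Rightarrow> (real \<Rightarrow> real) \<Rightarrow> (real \<Rightarrow> real) \<Rightarrow> real \<Rightarrow> pt set \<Rightarrow> ennreal" where
  "capacity K lam mu p S = (INF ug \<in> {(u,g). N1p0 K lam mu p u \<and> (\<forall>x \<in> S. u x = 1) \<and>
                                           upper_gradient K lam u g}. lp_int K mu p (snd ug))"

definition p_parabolic :: "nat \<Rightarrow> (real \<Rightarrow> real) \<Rightarrow> (real \<Rightarrow> real) \<Rightarrow> real \<Rightarrow> bool" where
  "p_parabolic K lam mu p \<longleftrightarrow>
     (\<forall>S. S \<subseteq> tree_pts K \<longrightarrow> compactin (tree_top K lam) S \<longrightarrow> capacity K lam mu p S = 0)"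

definition ball_n :: "nat \<Rightarrow> nat \<Rightarrow> pt set" where
  "ball_n K n = {x \<in> tree_pts K. height x \<le> real n}"

end

theory Submission
  imports Defs
begin

text \<open>Capacity is monotone and every ball \<open>X\<^sup>n\<close> is compact, so parabolicity gives
  \<open>Cap\<^sub>p(X\<^sup>n) = 0\<close>. Conversely, every compact set lies in some \<open>X\<^sup>n\<close>, because the
  sets \<open>{|x| < n}\<close> exhaust \<open>X\<close> and are open: a geodesic from height \<open>h < n\<close> to height
  \<open>\<ge> n\<close> has \<open>d\<close>-length at least \<open>\<integral>\<^bsub>max h (n-1)\<^esub>\<^bsup>n\<^esup> \<lambda> > 0\<close>.
  \<open>X\<^sup>n\<close> is compact as a finite union of edges, each a continuous image of \<open>[0,1]\<close>:
  along an edge, \<open>d\<close> is the increment of a primitive of \<open>\<lambda>\<close>.\<close>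

section \<open>Geodesics of the tree\<close>

lemma tree_root_in_pts: "tree_root \<in> tree_pts K"
  by (simp add: tree_pts_def tree_root_def)

lemma tree_pts_root: "x \<in> tree_pts K \<Longrightarrow> fst x = [] \<Longrightarrow> x = tree_root"
  by (cases x) (auto simp: tree_pts_def tree_root_def)

lemma on_root_path_antisym:
  assumes "x \<in> tree_pts K" "y \<in> tree_pts K" "on_root_path x y" "on_root_path y x"
  shows "x = y"
proof (cases "fst x = []")
  case True
  then have "fst y = []" using assms(4) by (auto simp: on_root_path_def)
  then show ?thesis using True assms(1,2) tree_pts_root by metis
next
  case False
  then have "fst y \<noteq> []" using assms(3) by (auto simp: on_root_path_def)
  then show ?thesis using assms False
    by (cases x, cases y) (auto simp: on_root_path_def prefix_order.antisym)
qed

lemma height_pair: "height (v, t) = real (length v) - 1 + t"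
  by (simp add: height_def)

lemma edge_offset_nonneg: "v \<in> tree_edges K \<Longrightarrow> 0 \<le> real (length v) - 1"
  by (cases v) (auto simp: tree_edges_def)

lemma height_nonneg: "x \<in> tree_pts K \<Longrightarrow> 0 \<le> height x"
  by (cases x; cases "fst x") (auto simp: tree_pts_def height_def)

lemma on_root_path_height_le:
  assumes x: "x \<in> tree_pts K" and y: "y \<in> tree_pts K" and xy: "on_root_path x y"
  shows "height x \<le> height y"
proof (cases "fst x = []")
  case True
  then show ?thesis using tree_pts_root[OF x] height_nonneg[OF y] by (simp add: tree_root_def height_def)
next
  case False
  then have pre: "prefix (fst x) (fst y)" and same: "fst x = fst y \<longrightarrow> snd x \<le> snd y"
    using xy by (auto simp: on_root_path_def)
  have "snd x \<le> 1" "0 < snd y" using x y by (cases x, cases y, auto simp: tree_pts_def)+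
  moreover have "length (fst x) < length (fst y)" if "fst x \<noteq> fst y"
    using pre that by (intro prefix_length_less strict_prefixI)
  ultimately show ?thesis using same by (cases "fst x = fst y") (auto simp: height_def)
qed

lemma root_geod_edge_iff:
  "v \<noteq> [] \<Longrightarrow> (v, t) \<in> root_geod K y \<longleftrightarrow>
     set v \<subseteq> {..<K} \<and> 0 < t \<and> t \<le> 1 \<and> prefix v (fst y) \<and> (v = fst y \<longrightarrow> t \<le> snd y)"
  by (auto simp: root_geod_def tree_pts_def on_root_path_def)

lemma geod_commute: "geod K y z = geod K z y"
  unfolding geod_def by auto

definition branch_pts :: "nat \<Rightarrow> pt \<Rightarrow> pt \<Rightarrow> pt set" where
  "branch_pts K y z = {m \<in> root_geod K y \<inter> root_geod K z.
     \<forall>x \<in> root_geod K y \<inter> root_geod K z. on_root_path x m}"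

lemma geod_eq_sym_diff_Un_branch_pts:
  "geod K y z = (root_geod K y - root_geod K z) \<union> (root_geod K z - root_geod K y) \<union> branch_pts K y z"
  by (simp add: geod_def branch_pts_def)

lemma branch_pts_unique:
  assumes "m \<in> branch_pts K y z" "m' \<in> branch_pts K y z"
  shows "m = m'"
  using assms on_root_path_antisym[of m K m'] by (auto simp: branch_pts_def root_geod_def)

definition edge_slice :: "pt set \<Rightarrow> nat list \<Rightarrow> real set" where
  "edge_slice S v = {t. (v, t) \<in> S}"

lemma edge_slice_branch_pts_subset:
  obtains c where "edge_slice (branch_pts K y z) v \<subseteq> {c}"
proof (cases "edge_slice (branch_pts K y z) v = {}")
  case False
  then obtain c where c: "(v, c) \<in> branch_pts K y z" by (auto simp: edge_slice_def)
  have "edge_slice (branch_pts K y z) v \<subseteq> {c}"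
    using branch_pts_unique[OF c] by (auto simp: edge_slice_def)
  then show ?thesis by (rule that)
qed (rule that, simp)

lemma sets_edge_slice_root_geod: "v \<in> tree_edges K \<Longrightarrow> edge_slice (root_geod K y) v \<in> sets borel"
proof -
  assume "v \<in> tree_edges K"
  then have "edge_slice (root_geod K y) v = (if set v \<subseteq> {..<K} \<and> prefix v (fst y) then
      (if v = fst y then {0<..min 1 (snd y)} else {0<..1}) else {})"
    by (auto simp: edge_slice_def root_geod_edge_iff tree_edges_def)
  then show ?thesis by simp
qed

lemma sets_edge_slice_geod: "v \<in> tree_edges K \<Longrightarrow> edge_slice (geod K y z) v \<in> sets borel"
proof -
  assume v: "v \<in> tree_edges K"
  obtain c where "edge_slice (branch_pts K y z) v \<subseteq> {c}"
    by (rule edge_slice_branch_pts_subset)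
  then have "finite (edge_slice (branch_pts K y z) v)"
    by (rule finite_subset) simp
  then have "closed (edge_slice (branch_pts K y z) v)"
    by (rule finite_imp_closed)
  moreover have "edge_slice (geod K y z) v = (edge_slice (root_geod K y) v - edge_slice (root_geod K z) v)
      \<union> (edge_slice (root_geod K z) v - edge_slice (root_geod K y) v) \<union> edge_slice (branch_pts K y z) v"
    by (auto simp: edge_slice_def geod_eq_sym_diff_Un_branch_pts)
  ultimately show ?thesis
    using sets_edge_slice_root_geod[OF v, of y] sets_edge_slice_root_geod[OF v, of z] by auto
qed

section \<open>Line integrals\<close>

lemma line_int_mono_AE:
  assumes "\<And>v. v \<in> tree_edges K \<Longrightarrow>
      AE t in lborel. 0 < t \<and> t \<le> 1 \<and> (v, t) \<in> S \<longrightarrow> (v, t) \<in> T"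
  shows "line_int K f S \<le> line_int K f T"
  unfolding line_int_def
proof (rule nn_integral_mono)
  fix v assume "v \<in> space (count_space (tree_edges K))"
  then have "AE t in lborel. 0 < t \<and> t \<le> 1 \<and> (v, t) \<in> S \<longrightarrow> (v, t) \<in> T"
    using assms by simp
  then show "(\<integral>\<^sup>+ t. f (v, t) * indicator S (v, t) * indicator {0<..1} t \<partial>lborel)
      \<le> (\<integral>\<^sup>+ t. f (v, t) * indicator T (v, t) * indicator {0<..1} t \<partial>lborel)"
    by (intro nn_integral_mono_AE) (auto elim!: eventually_mono simp: indicator_def)
qed

lemma line_int_mono: "S \<subseteq> T \<Longrightarrow> line_int K f S \<le> line_int K f T"
  by (rule line_int_mono_AE) auto

text \<open>A single point per edge is a null set, so the branching point never matters.\<close>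

lemma line_int_mono_off_branch_pts:
  assumes "\<And>q. q \<in> S - branch_pts K y z \<Longrightarrow> q \<in> T"
  shows "line_int K f S \<le> line_int K f T"
proof (rule line_int_mono_AE)
  fix v
  obtain c where "edge_slice (branch_pts K y z) v \<subseteq> {c}"
    by (rule edge_slice_branch_pts_subset)
  then have c: "\<And>t. (v, t) \<in> branch_pts K y z \<Longrightarrow> t = c"
    by (auto simp: edge_slice_def)
  show "AE t in lborel. 0 < t \<and> t \<le> 1 \<and> (v, t) \<in> S \<longrightarrow> (v, t) \<in> T"
    using AE_lborel_singleton[of c] by (rule eventually_mono) (use c assms in blast)
qed

lemma line_int_segment_le:
  assumes "v \<in> tree_edges K" "0 \<le> a" "b \<le> 1" "\<And>t. a < t \<Longrightarrow> t \<le> b \<Longrightarrow> (v, t) \<in> S"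
  shows "(\<integral>\<^sup>+ t. f (v, t) * indicator {a<..b} t \<partial>lborel) \<le> line_int K f S"
proof -
  have "(\<integral>\<^sup>+ t. f (v, t) * indicator {a<..b} t \<partial>lborel)
      \<le> (\<integral>\<^sup>+ t. f (v, t) * indicator S (v, t) * indicator {0<..1} t \<partial>lborel)"
    using assms by (intro nn_integral_mono) (auto simp: indicator_def)
  also have "\<dots> \<le> line_int K f S"
    unfolding line_int_def using assms(1) by (rule nn_integral_ge_point)
  finally show ?thesis .
qed

lemma line_int_Un_le:
  assumes "\<And>v. v \<in> tree_edges K \<Longrightarrow>
      (\<lambda>t. f (v, t) * indicator S (v, t) * indicator {0<..1} t) \<in> borel_measurable lborel"
    and "\<And>v. v \<in> tree_edges K \<Longrightarrow>
      (\<lambda>t. f (v, t) * indicator T (v, t) * indicator {0<..1} t) \<in> borel_measurable lborel"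
  shows "line_int K f (S \<union> T) \<le> line_int K f S + line_int K f T"
proof -
  let ?I = "\<lambda>A v. \<integral>\<^sup>+ t. f (v, t) * indicator A (v, t) * indicator {0<..1} t \<partial>lborel"
  have "?I (S \<union> T) v \<le> ?I S v + ?I T v" if v: "v \<in> tree_edges K" for v
  proof -
    have "?I (S \<union> T) v \<le> (\<integral>\<^sup>+ t. f (v, t) * indicator S (v, t) * indicator {0<..1} t
        + f (v, t) * indicator T (v, t) * indicator {0<..1} t \<partial>lborel)"
      by (intro nn_integral_mono) (auto simp: indicator_def)
    also have "\<dots> = ?I S v + ?I T v"
      using assms v by (intro nn_integral_add) auto
    finally show ?thesis .
  qed
  then have "line_int K f (S \<union> T) \<le> (\<integral>\<^sup>+ v. ?I S v + ?I T v \<partial>count_space (tree_edges K))"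
    unfolding line_int_def by (intro nn_integral_mono) auto
  also have "\<dots> = line_int K f S + line_int K f T"
    unfolding line_int_def by (intro nn_integral_add) auto
  finally show ?thesis .
qed

section \<open>The metric \<open>d\<close>\<close>

locale weighted_tree =
  fixes K :: nat and lam :: "real \<Rightarrow> real"
  assumes lam_pos: "\<And>r. 0 \<le> r \<Longrightarrow> 0 < lam r"
    and lam_set_integrable: "\<And>R. set_integrable lborel {0..R} lam"
begin

abbreviation lam_length :: "pt set \<Rightarrow> ennreal" where
  "lam_length S \<equiv> line_int K (\<lambda>x. ennreal (lam (height x))) S"

lemma borel_measurable_lam_restrict [measurable]:
  "(\<lambda>u. indicator {0..R} u * lam u) \<in> borel_measurable borel"
  using borel_measurable_integrable[OF lam_set_integrable[of R, unfolded set_integrable_def]]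
  by simp

lemma lam_integrable_on: "0 \<le> A \<Longrightarrow> lam integrable_on {A..B}"
  using integrable_on_subinterval[OF set_borel_integral_eq_integral(1)[OF lam_set_integrable[of B]]]
  by (cases "A \<le> B") auto

definition Lam :: "real \<Rightarrow> real" where
  "Lam x = integral {0..x} lam"

lemma continuous_on_Lam: "continuous_on {0..R} Lam"
  unfolding Lam_def by (rule indefinite_integral_continuous_1) (rule lam_integrable_on, simp)

lemma integral_lam_eq_Lam_diff: "0 \<le> A \<Longrightarrow> A \<le> B \<Longrightarrow> integral {A..B} lam = Lam B - Lam A"
  unfolding Lam_def
  using Henstock_Kurzweil_Integration.integral_combine[where a=0 and c=A and b=B and f=lam] lam_integrable_on[of 0 B] by simp

lemma Lam_mono: "0 \<le> A \<Longrightarrow> A \<le> B \<Longrightarrow> Lam A \<le> Lam B"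
  using integral_nonneg[OF lam_integrable_on, of A B] lam_pos integral_lam_eq_Lam_diff[of A B]
  by (force intro: less_imp_le)

lemma nn_integral_lam_shift:
  assumes "0 \<le> c + a"
  shows "(\<integral>\<^sup>+ t. ennreal (lam (c + t)) * indicator {a<..b} t \<partial>lborel)
       = (\<integral>\<^sup>+ u. ennreal (lam u) * indicator {c+a<..c+b} u \<partial>lborel)"
proof -
  define f where "f u = ennreal (indicator {0..c+b} u * lam u) * indicator {c+a<..c+b} u" for u
  have "f \<in> borel_measurable borel" unfolding f_def by measurable
  then have "(\<integral>\<^sup>+ u. f u \<partial>lborel) = (\<integral>\<^sup>+ t. f (c + t) \<partial>lborel)"
    using nn_integral_real_affine[of f 1 c] by simp
  moreover have "f u = ennreal (lam u) * indicator {c+a<..c+b} u" for u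
    using assms by (auto simp: f_def indicator_def)
  moreover have "f (c + t) = ennreal (lam (c + t)) * indicator {a<..b} t" for t
    using assms by (auto simp: f_def indicator_def)
  ultimately show ?thesis by simp
qed

lemma nn_integral_lam_interval:
  assumes "0 \<le> A" "A \<le> B"
  shows "(\<integral>\<^sup>+ u. ennreal (lam u) * indicator {A<..B} u \<partial>lborel) = ennreal (Lam B - Lam A)"
proof -
  have "(\<integral>\<^sup>+ u. ennreal (lam u) * indicator {A<..B} u \<partial>lborel)
      = (\<integral>\<^sup>+ u. ennreal (indicator {A..B} u * lam u) \<partial>lborel)"
    using AE_lborel_singleton[of A] by (intro nn_integral_cong_AE) (auto elim!: eventually_mono simp: indicator_def)
  also have "\<dots> = ennreal (integral {A..B} lam)"
    using assms lam_pos lam_integrable_on[OF assms(1)]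
    by (intro nn_integral_has_integral_lebesgue) (auto intro: less_imp_le)
  finally show ?thesis using assms by (simp add: integral_lam_eq_Lam_diff)
qed

lemma nn_integral_lam_interval_pos:
  assumes "0 \<le> A" "A < B"
  shows "0 < (\<integral>\<^sup>+ u. ennreal (lam u) * indicator {A<..B} u \<partial>lborel)"
proof -
  define f where "f u = ennreal (indicator {0..B} u * lam u) * indicator {A<..B} u" for u
  have f: "f \<in> borel_measurable lborel" unfolding f_def by measurable
  have "{A<..B} \<subseteq> {x \<in> space lborel. f x \<noteq> 0}"
    using assms lam_pos by (auto simp: f_def ennreal_eq_0_iff not_le)
  then have "emeasure lborel {A<..B} \<le> emeasure lborel {x \<in> space lborel. f x \<noteq> 0}"
    using f by (intro emeasure_mono) auto
  moreover have "0 < emeasure lborel {A<..B}"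
    using assms by simp
  ultimately have "0 < emeasure lborel {x \<in> space lborel. f x \<noteq> 0}"
    by (rule order_less_le_trans[rotated])
  then have "integral\<^sup>N lborel f \<noteq> 0" using nn_integral_0_iff[OF f] by simp
  moreover have "f = (\<lambda>u. ennreal (lam u) * indicator {A<..B} u)"
    using assms by (auto simp: f_def indicator_def)
  ultimately show ?thesis by (simp add: zero_less_iff_neq_zero)
qed

text \<open>On the edge \<open>v\<close>, the integrand is \<open>lam (c + t)\<close> with \<open>c = length v - 1\<close>.\<close>

lemma edge_integral_eq:
  "0 \<le> c + a \<Longrightarrow> a \<le> b \<Longrightarrow>
    (\<integral>\<^sup>+ t. ennreal (lam (c + t)) * indicator {a<..b} t \<partial>lborel) = ennreal (Lam (c + b) - Lam (c + a))"
  by (simp add: nn_integral_lam_shift nn_integral_lam_interval)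

lemma edge_integral_pos:
  "0 \<le> c + a \<Longrightarrow> a < b \<Longrightarrow> 0 < (\<integral>\<^sup>+ t. ennreal (lam (c + t)) * indicator {a<..b} t \<partial>lborel)"
  by (simp add: nn_integral_lam_shift nn_integral_lam_interval_pos)

end

lemma root_geod_Diff_contains_segment:
  assumes x: "x \<in> tree_pts K" and y: "y \<in> tree_pts K" and yx: "\<not> on_root_path y x"
  obtains a where "fst y \<in> tree_edges K" "0 \<le> a" "a < snd y" "snd y \<le> 1"
    "\<And>t. a < t \<Longrightarrow> t \<le> snd y \<Longrightarrow> (fst y, t) \<in> root_geod K y - root_geod K x"
proof -
  obtain w s where y_eq: "y = (w, s)" by (cases y)
  have w: "w \<noteq> []" using yx by (auto simp: y_eq on_root_path_def)
  have ws: "set w \<subseteq> {..<K}" "0 < s" "s \<le> 1" using y by (auto simp: y_eq tree_pts_def)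
  have "0 < snd x" using x by (cases x) (auto simp: tree_pts_def)
  moreover have "\<not> prefix w (fst x) \<or> (w = fst x \<and> snd x < s)"
    using yx w by (auto simp: y_eq on_root_path_def)
  ultimately show ?thesis
    using w ws by (intro that[of "if w = fst x then snd x else 0"])
      (auto simp: y_eq tree_edges_def root_geod_edge_iff split: if_splits)
qed

context weighted_tree
begin

lemma borel_measurable_edge_integrand:
  assumes v: "v \<in> tree_edges K" and S: "edge_slice S v \<in> sets borel"
  shows "(\<lambda>t. ennreal (lam (height (v, t))) * indicator S (v, t) * indicator {0<..1::real} t)
    \<in> borel_measurable lborel"
proof -
  define c where "c = real (length v) - 1"
  have "(\<lambda>t. ennreal (lam (height (v, t))) * indicator S (v, t) * indicator {0<..1::real} t)
     = (\<lambda>t. ennreal (indicator {0..c+1} (c+t) * lam (c+t)) * indicator (edge_slice S v) t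
          * indicator {0<..1::real} t)"
    using edge_offset_nonneg[OF v] by (auto simp: fun_eq_iff c_def height_pair indicator_def edge_slice_def)
  moreover have [measurable]: "edge_slice S v \<in> sets borel" by fact
  ultimately show ?thesis by simp
qed

lemma lam_length_Un_le:
  assumes "\<And>v. v \<in> tree_edges K \<Longrightarrow> edge_slice S v \<in> sets borel"
    and "\<And>v. v \<in> tree_edges K \<Longrightarrow> edge_slice T v \<in> sets borel"
  shows "lam_length (S \<union> T) \<le> lam_length S + lam_length T"
  by (rule line_int_Un_le; rule borel_measurable_edge_integrand; simp add: assms)

lemma edge_integral_finite:
  assumes v: "v \<in> tree_edges K"
  shows "(\<integral>\<^sup>+ t. ennreal (lam (height (v, t))) * indicator S (v, t) * indicator {0<..1::real} t \<partial>lborel) < \<infinity>"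
proof -
  define c where "c = real (length v) - 1"
  have "(\<integral>\<^sup>+ t. ennreal (lam (height (v, t))) * indicator S (v, t) * indicator {0<..1::real} t \<partial>lborel)
     \<le> (\<integral>\<^sup>+ t. ennreal (lam (c + t)) * indicator {0<..1::real} t \<partial>lborel)"
    by (intro nn_integral_mono) (auto simp: indicator_def c_def height_pair)
  also have "\<dots> = ennreal (Lam (c + 1) - Lam (c + 0))"
    using edge_offset_nonneg[OF v] by (intro edge_integral_eq) (auto simp: c_def)
  finally show ?thesis by (simp add: order_le_less_trans)
qed

lemma lam_length_root_geod_finite: "lam_length (root_geod K y) < \<infinity>"
proof -
  define A where "A = {v \<in> tree_edges K. prefix v (fst y)}"
  have A: "finite A"
    by (rule finite_subset[of _ "set (prefixes (fst y))"]) (auto simp: A_def)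
  have "lam_length (root_geod K y) = (\<Sum>v\<in>A. \<integral>\<^sup>+ t. ennreal (lam (height (v, t)))
      * indicator (root_geod K y) (v, t) * indicator {0<..1::real} t \<partial>lborel)"
    unfolding line_int_def using A
    by (intro nn_integral_count_space') (auto simp: A_def tree_edges_def root_geod_edge_iff)
  also have "\<dots> < \<infinity>"
    using A edge_integral_finite by (simp add: ennreal_sum_less_top A_def)
  finally show ?thesis .
qed

lemma lam_length_geod_finite: "lam_length (geod K y z) < \<infinity>"
proof -
  have "lam_length (geod K y z) \<le> lam_length (root_geod K y \<union> root_geod K z)"
    by (rule line_int_mono) (auto simp: geod_def)
  also have "\<dots> \<le> lam_length (root_geod K y) + lam_length (root_geod K z)"
    by (intro lam_length_Un_le sets_edge_slice_root_geod)
  also have "\<dots> < \<infinity>"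
    using lam_length_root_geod_finite by simp
  finally show ?thesis .
qed

lemma lam_length_geod_self: "lam_length (geod K x x) = 0"
proof -
  have "lam_length (geod K x x) \<le> lam_length {}"
    by (rule line_int_mono_off_branch_pts[where y=x and z=x])
      (simp add: geod_eq_sym_diff_Un_branch_pts)
  then show ?thesis by (simp add: line_int_def)
qed

lemma lam_length_geod_triangle:
  "lam_length (geod K x z) \<le> lam_length (geod K x y) + lam_length (geod K y z)"
proof -
  have "lam_length (geod K x z) \<le> lam_length (geod K x y \<union> geod K y z)"
    by (rule line_int_mono_off_branch_pts[where y=x and z=z])
      (auto simp: geod_eq_sym_diff_Un_branch_pts)
  also have "\<dots> \<le> lam_length (geod K x y) + lam_length (geod K y z)"
    by (intro lam_length_Un_le sets_edge_slice_geod)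
  finally show ?thesis .
qed

lemma lam_length_geod_pos:
  assumes x: "x \<in> tree_pts K" and y: "y \<in> tree_pts K" and yx: "\<not> on_root_path y x"
  shows "0 < lam_length (geod K x y)"
proof -
  obtain a where y_edge: "fst y \<in> tree_edges K" and a: "0 \<le> a" "a < snd y" "snd y \<le> 1"
    and seg: "\<And>t. a < t \<Longrightarrow> t \<le> snd y \<Longrightarrow> (fst y, t) \<in> root_geod K y - root_geod K x"
    using root_geod_Diff_contains_segment[OF x y yx] by blast
  define c where "c = real (length (fst y)) - 1"
  have "0 < (\<integral>\<^sup>+ t. ennreal (lam (c + t)) * indicator {a<..snd y} t \<partial>lborel)"
    using edge_offset_nonneg[OF y_edge] a by (intro edge_integral_pos) (auto simp: c_def)
  also have "\<dots> = (\<integral>\<^sup>+ t. ennreal (lam (height (fst y, t))) * indicator {a<..snd y} t \<partial>lborel)"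
    by (simp add: c_def height_pair)
  also have "\<dots> \<le> lam_length (geod K x y)"
    using seg by (intro line_int_segment_le[OF y_edge a(1) a(3)]) (auto simp: geod_def)
  finally show ?thesis .
qed

lemma Metric_space_tree_dist: "Metric_space (tree_pts K) (tree_dist K lam)"
proof
  fix x y z
  show "0 \<le> tree_dist K lam x y" by (simp add: tree_dist_def)
  show "tree_dist K lam x y = tree_dist K lam y x" by (simp add: tree_dist_def geod_commute)
  assume x: "x \<in> tree_pts K" and y: "y \<in> tree_pts K"
  have "0 < tree_dist K lam x y" if "x \<noteq> y"
  proof -
    have "\<not> on_root_path y x \<or> \<not> on_root_path x y"
      using on_root_path_antisym x y that by blast
    then have "0 < lam_length (geod K x y)"
      using lam_length_geod_pos[OF x y] lam_length_geod_pos[OF y x] geod_commute by metis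
    then show ?thesis
      using lam_length_geod_finite by (simp add: tree_dist_def enn2real_positive_iff)
  qed
  moreover have "tree_dist K lam x x = 0"
    by (simp add: tree_dist_def lam_length_geod_self)
  ultimately show "tree_dist K lam x y = 0 \<longleftrightarrow> x = y"
    by force
  assume z: "z \<in> tree_pts K"
  have "tree_dist K lam x z \<le> enn2real (lam_length (geod K x y) + lam_length (geod K y z))"
    unfolding tree_dist_def using lam_length_geod_triangle lam_length_geod_finite
    by (intro enn2real_mono) auto
  also have "\<dots> = tree_dist K lam x y + tree_dist K lam y z"
    unfolding tree_dist_def using lam_length_geod_finite by (intro enn2real_plus) auto
  finally show "tree_dist K lam x z \<le> tree_dist K lam x y + tree_dist K lam y z" .
qed

end

sublocale weighted_tree \<subseteq> M: Metric_space "tree_pts K" "tree_dist K lam"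
  by (rule Metric_space_tree_dist)

lemma (in weighted_tree) tree_top_eq: "tree_top K lam = M.mtopology"
  by (simp add: tree_top_def)

section \<open>Compact sets have bounded height\<close>

lemma compactin_subset_incseq:
  fixes U :: "nat \<Rightarrow> 'a set"
  assumes "compactin X S" "\<And>n. openin X (U n)" "mono U" "S \<subseteq> (\<Union>n. U n)"
  obtains n where "S \<subseteq> U n"
proof -
  obtain \<F> where "finite \<F>" "\<F> \<subseteq> range U" "S \<subseteq> \<Union>\<F>"
    using compactinD[OF assms(1), of "range U"] assms(2,4) by blast
  then obtain N where N: "finite N" "S \<subseteq> (\<Union>m\<in>N. U m)"
    by (metis finite_subset_image)
  have "U m \<subseteq> U (Max (insert 0 N))" if "m \<in> N" for m
    using N(1) that by (intro monoD[OF assms(3)]) simp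
  then show ?thesis
    using N(2) that by blast
qed

text \<open>A geodesic from height below \<open>n\<close> to height at least \<open>n\<close> runs through the upper part,
  above height \<open>max |x| (n - 1)\<close>, of the edge ending at level \<open>n\<close>.\<close>

lemma geod_contains_level_segment:
  assumes x: "x \<in> tree_pts K" and y: "y \<in> tree_pts K"
    and hx: "height x < real n" and hy: "real n \<le> height y"
    and t: "max 0 (height x - real n + 1) < t" "t \<le> 1"
  shows "(take n (fst y), t) \<in> geod K x y"
proof -
  obtain u s where y_eq: "y = (u, s)" by (cases y)
  have us: "set u \<subseteq> {..<K}" "0 < s" "s \<le> 1" using y by (auto simp: y_eq tree_pts_def)
  have n: "1 \<le> n" using height_nonneg[OF x] hx by simp
  have u: "n \<le> length u" using hy us by (simp add: y_eq height_def)
  define w where "w = take n u"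
  have w: "length w = n" "w \<noteq> []" "set w \<subseteq> {..<K}" "prefix w u"
    using u n us set_take_subset[of n u] by (auto simp: w_def take_is_prefix)
  have "(w, t) \<in> root_geod K y"
  proof -
    have "t \<le> s" if "w = u"
      using that w hy t by (simp add: y_eq height_def)
    then show ?thesis using w t by (simp add: root_geod_edge_iff y_eq)
  qed
  moreover have "height x < height (w, t)"
    using t w by (simp add: height_def)
  then have "(w, t) \<notin> root_geod K x"
    using on_root_path_height_le[OF _ x] by (force simp: root_geod_def)
  ultimately show ?thesis
    unfolding geod_def w_def y_eq by auto
qed

context weighted_tree
begin

lemma tree_dist_to_level_ge:
  assumes x: "x \<in> tree_pts K" and hx: "height x < real n"
  obtains r where "0 < r" "\<And>y. y \<in> tree_pts K \<Longrightarrow> real n \<le> height y \<Longrightarrow> r \<le> tree_dist K lam x y"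
proof -
  have n: "1 \<le> n" using height_nonneg[OF x] hx by simp
  define c where "c = real n - 1"
  define b where "b = max 0 (height x - real n + 1)"
  define E where "E = (\<integral>\<^sup>+ t. ennreal (lam (c + t)) * indicator {b<..1} t \<partial>lborel)"
  have b: "0 \<le> b" "b < 1" "0 \<le> c + b" using hx n by (auto simp: b_def c_def)
  have "0 < enn2real E"
    using edge_integral_pos[of c b 1] edge_integral_eq[of c b 1] b
    by (simp add: E_def enn2real_positive_iff)
  moreover have "enn2real E \<le> tree_dist K lam x y"
    if y: "y \<in> tree_pts K" and hy: "real n \<le> height y" for y
  proof -
    have w: "take n (fst y) \<in> tree_edges K" "length (take n (fst y)) = n"
      using y hy n height_nonneg[OF x] hx
      by (cases y; force simp: tree_pts_def tree_edges_def height_def dest: in_set_takeD)+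
    have "E = (\<integral>\<^sup>+ t. ennreal (lam (height (take n (fst y), t))) * indicator {b<..1} t \<partial>lborel)"
      using w(2) by (simp add: E_def height_pair c_def)
    also have "\<dots> \<le> lam_length (geod K x y)"
      using geod_contains_level_segment[OF x y hx hy] b
      by (intro line_int_segment_le[OF w(1)]) (auto simp: b_def)
    finally show ?thesis
      unfolding tree_dist_def using lam_length_geod_finite by (intro enn2real_mono) auto
  qed
  ultimately show ?thesis using that by blast
qed

lemma openin_height_less: "openin (tree_top K lam) {x \<in> tree_pts K. height x < real n}"
  unfolding tree_top_eq M.openin_mtopology
proof (intro conjI allI impI)
  fix x assume "x \<in> {x \<in> tree_pts K. height x < real n}"
  then obtain r where "0 < r" "\<And>y. y \<in> tree_pts K \<Longrightarrow> real n \<le> height y \<Longrightarrow> r \<le> tree_dist K lam x y"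
    using tree_dist_to_level_ge by blast
  then show "\<exists>r>0. M.mball x r \<subseteq> {x \<in> tree_pts K. height x < real n}"
    by (force simp: not_less)
qed auto

lemma compactin_subset_ball_n:
  assumes "compactin (tree_top K lam) S"
  obtains m where "S \<subseteq> ball_n K m"
proof -
  let ?U = "\<lambda>n. {x \<in> tree_pts K. height x < real n}"
  have "S \<subseteq> tree_pts K"
    using compactin_subset_topspace[OF assms] by (simp add: tree_top_eq)
  then have "S \<subseteq> (\<Union>n. ?U n)"
    using reals_Archimedean2 by blast
  moreover have "mono ?U"
    by (auto simp: mono_def)
  ultimately obtain m where "S \<subseteq> ?U m"
    using compactin_subset_incseq[of _ S ?U] assms openin_height_less by blast
  then have "S \<subseteq> ball_n K m"
    by (auto simp: ball_n_def)
  then show ?thesis ..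
qed

end

section \<open>Compactness of the balls \<open>X\<^sup>n\<close>\<close>

text \<open>Parameter \<open>0\<close> is sent to the parent vertex \<open>(butlast w, 1)\<close>, since points \<open>(w, 0)\<close>
  do not exist.\<close>

definition edge_point :: "nat list \<Rightarrow> real \<Rightarrow> pt" where
  "edge_point w s = (if s \<le> 0 then (butlast w, 1) else (w, s))"

lemma edge_point_in_pts:
  "w \<in> tree_edges K \<Longrightarrow> 0 \<le> s \<Longrightarrow> s \<le> 1 \<Longrightarrow> edge_point w s \<in> tree_pts K"
  by (auto simp: edge_point_def tree_pts_def tree_edges_def dest: in_set_butlastD)

lemma prefix_butlast_iff: "w \<noteq> [] \<Longrightarrow> prefix u (butlast w) \<longleftrightarrow> prefix u w \<and> u \<noteq> w"
proof -
  assume w: "w \<noteq> []"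
  then have "prefix u w \<longleftrightarrow> u = w \<or> prefix u (butlast w)"
    by (metis append_butlast_last_id prefix_snoc)
  moreover have "u \<noteq> w" if "prefix u (butlast w)"
    using w prefix_length_le[OF that] by (cases w rule: rev_cases) auto
  ultimately show ?thesis by blast
qed

lemma root_geod_edge_point_sym_diff:
  assumes w: "w \<in> tree_edges K" and s: "0 \<le> s" "s \<le> s'"
    and q: "q \<in> (root_geod K (edge_point w s) - root_geod K (edge_point w s'))
              \<union> (root_geod K (edge_point w s') - root_geod K (edge_point w s))"
  shows "fst q = w \<and> s < snd q \<and> snd q \<le> s'"
proof -
  have w: "w \<noteq> []" using w by (simp add: tree_edges_def)
  obtain u t where q_eq: "q = (u, t)" by (cases q)
  have t: "0 < t" "t \<le> 1" and u: "u \<noteq> []"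
    using q by (auto simp: q_eq root_geod_def tree_pts_def on_root_path_def)
  consider "s' \<le> 0" | "s \<le> 0" "0 < s'" | "0 < s" by linarith
  then show ?thesis
  proof cases
    case 1
    then have "edge_point w s = edge_point w s'" using s by (simp add: edge_point_def)
    then show ?thesis using q by auto
  next
    case 2
    then show ?thesis using q u t w
      by (auto simp: edge_point_def q_eq root_geod_def on_root_path_def prefix_butlast_iff)
  next
    case 3
    then show ?thesis using q u t w s
      by (auto simp: edge_point_def q_eq root_geod_def on_root_path_def)
  qed
qed

context weighted_tree
begin

lemma tree_dist_edge_point_le:
  assumes w: "w \<in> tree_edges K" and s: "0 \<le> s" "s \<le> s'" "s' \<le> 1"
  shows "tree_dist K lam (edge_point w s) (edge_point w s')
    \<le> Lam (real (length w) - 1 + s') - Lam (real (length w) - 1 + s)"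
proof -
  define c where "c = real (length w) - 1"
  define T where "T = {q. fst q = w \<and> s < snd q \<and> snd q \<le> s'}"
  have "lam_length (geod K (edge_point w s) (edge_point w s')) \<le> lam_length T"
    using root_geod_edge_point_sym_diff[OF w s(1,2)]
    by (intro line_int_mono_off_branch_pts[where y="edge_point w s" and z="edge_point w s'"])
      (auto simp: T_def geod_eq_sym_diff_Un_branch_pts)
  also have "lam_length T = (\<Sum>v\<in>{w}. \<integral>\<^sup>+ t. ennreal (lam (height (v, t)))
      * indicator T (v, t) * indicator {0<..1::real} t \<partial>lborel)"
    unfolding line_int_def using w by (intro nn_integral_count_space') (auto simp: T_def)
  also have "\<dots> \<le> (\<integral>\<^sup>+ t. ennreal (lam (c + t)) * indicator {s<..s'} t \<partial>lborel)"
    by (auto intro!: nn_integral_mono simp: T_def indicator_def height_pair c_def)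
  also have "\<dots> = ennreal (Lam (c + s') - Lam (c + s))"
    using edge_offset_nonneg[OF w] s by (intro edge_integral_eq) (auto simp: c_def)
  finally have "tree_dist K lam (edge_point w s) (edge_point w s') \<le> enn2real (ennreal (Lam (c + s') - Lam (c + s)))"
    unfolding tree_dist_def by (intro enn2real_mono) auto
  then show ?thesis
    using Lam_mono[of "c + s" "c + s'"] edge_offset_nonneg[OF w] s by (simp add: c_def)
qed

lemma continuous_map_edge_point:
  assumes w: "w \<in> tree_edges K"
  shows "continuous_map (top_of_set {0..1}) (tree_top K lam) (edge_point w)"
  unfolding tree_top_eq M.continuous_map_to_metric
proof (intro ballI allI impI)
  fix s e :: real
  assume "s \<in> topspace (top_of_set {0..1})" and e: "0 < e"
  then have s: "0 \<le> s" "s \<le> 1" by auto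
  define c where "c = real (length w) - 1"
  have c: "0 \<le> c" using edge_offset_nonneg[OF w] by (simp add: c_def)
  obtain d where d: "0 < d" "\<And>u. u \<in> {0..c+1} \<Longrightarrow> dist u (c+s) < d \<Longrightarrow> dist (Lam u) (Lam (c+s)) < e"
    using continuous_on_Lam[of "c+1"] e s c unfolding continuous_on_iff by (metis atLeastAtMost_iff add_le_cancel_left add_nonneg_nonneg)
  have "edge_point w y \<in> M.mball (edge_point w s) e" if y: "y \<in> {0..1} \<inter> ball s d" for y
  proof -
    have "\<bar>Lam (c + y) - Lam (c + s)\<bar> < e"
      using d(2)[of "c + y"] y c by (auto simp: dist_real_def dist_commute)
    moreover have "tree_dist K lam (edge_point w s) (edge_point w y) \<le> \<bar>Lam (c + y) - Lam (c + s)\<bar>"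
    proof (cases "s \<le> y")
      case True
      then show ?thesis using tree_dist_edge_point_le[OF w s(1) True] y by (simp add: c_def)
    next
      case False
      then show ?thesis using tree_dist_edge_point_le[OF w _ _ s(2), of y] y
        by (simp add: c_def M.commute)
    qed
    ultimately show ?thesis
      using edge_point_in_pts[OF w] s y by auto
  qed
  moreover have "openin (top_of_set {0..1}) ({0..1} \<inter> ball s d)"
    by (simp add: openin_open_Int)
  ultimately show "\<exists>U. openin (top_of_set {0..1}) U \<and> s \<in> U \<and>
      (\<forall>y\<in>U. edge_point w y \<in> M.mball (edge_point w s) e)"
    using s d(1) by (intro exI[of _ "{0..1} \<inter> ball s d"]) auto
qed

lemma ball_n_eq_Union_edges:
  "ball_n K n = insert tree_root (\<Union>w\<in>{w \<in> tree_edges K. length w \<le> n}. edge_point w ` {0..1})"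
proof (intro equalityI subsetI)
  fix x assume x: "x \<in> ball_n K n"
  obtain u t where x_eq: "x = (u, t)" by (cases x)
  have t: "set u \<subseteq> {..<K}" "0 < t" "t \<le> 1" "u = [] \<longrightarrow> t = 1" and hx: "height x \<le> real n"
    using x by (auto simp: x_eq ball_n_def tree_pts_def)
  show "x \<in> insert tree_root (\<Union>w\<in>{w \<in> tree_edges K. length w \<le> n}. edge_point w ` {0..1})"
  proof (cases "u = []")
    case True then show ?thesis using t by (simp add: x_eq tree_root_def)
  next
    case False
    then have "u \<in> tree_edges K" "length u \<le> n" "x = edge_point u t"
      using t hx by (auto simp: x_eq height_def tree_edges_def edge_point_def)
    then show ?thesis using t by auto
  qed
next
  fix x assume "x \<in> insert tree_root (\<Union>w\<in>{w \<in> tree_edges K. length w \<le> n}. edge_point w ` {0..1})"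
  then consider "x = tree_root" | w s where "w \<in> tree_edges K" "length w \<le> n" "s \<in> {0..1}" "x = edge_point w s"
    by auto
  then show "x \<in> ball_n K n"
  proof cases
    case 1 then show ?thesis using tree_root_in_pts by (simp add: ball_n_def tree_root_def height_def)
  next
    case 2
    then have "height x \<le> real n"
      by (cases "s \<le> 0") (auto simp: edge_point_def height_def)
    then show ?thesis using 2 edge_point_in_pts by (auto simp: ball_n_def)
  qed
qed

lemma compactin_ball_n: "compactin (tree_top K lam) (ball_n K n)"
proof -
  have "finite {w \<in> tree_edges K. length w \<le> n}"
    by (rule finite_subset[OF _ finite_lists_length_le[of "{..<K}" n]]) (auto simp: tree_edges_def)
  moreover have "compactin (tree_top K lam) (edge_point w ` {0..1})" if "w \<in> tree_edges K" for w
    using continuous_map_edge_point[OF that] by (rule image_compactin[rotated]) (simp add: compactin_subtopology)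
  ultimately have "compactin (tree_top K lam) (\<Union>w\<in>{w \<in> tree_edges K. length w \<le> n}. edge_point w ` {0..1})"
    by (intro compactin_Union) auto
  moreover have "compactin (tree_top K lam) {tree_root}"
    by (simp add: tree_top_eq tree_root_in_pts)
  ultimately show ?thesis
    unfolding ball_n_eq_Union_edges using compactin_Un by fastforce
qed

end

lemma capacity_mono: "S \<subseteq> T \<Longrightarrow> capacity K lam mu p S \<le> capacity K lam mu p T"
  unfolding capacity_def by (rule INF_superset_mono) auto

theorem lemma3p1:
  fixes K :: nat and p :: real and lam mu :: "real \<Rightarrow> real"
  assumes "K \<ge> 1" and "1 < p"
    and "\<forall>r \<ge> 0. lam r > 0" and "\<forall>r \<ge> 0. mu r > 0"
    and "\<forall>R. set_integrable lborel {0..R} lam"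
    and "\<forall>R. set_integrable lborel {0..R} mu"
    and "\<forall>R. set_integrable lborel {0..R} (\<lambda>r. (lam r powr p / mu r) powr (1 / (p - 1)))"
  shows "p_parabolic K lam mu p \<longleftrightarrow> (\<forall>n::nat. capacity K lam mu p (ball_n K n) = 0)"
proof -
  interpret weighted_tree K lam
    using assms(3,5) by unfold_locales auto
  show ?thesis
  proof
    assume "p_parabolic K lam mu p"
    then show "\<forall>n. capacity K lam mu p (ball_n K n) = 0"
      unfolding p_parabolic_def using compactin_ball_n by (auto simp: ball_n_def)
  next
    assume balls: "\<forall>n. capacity K lam mu p (ball_n K n) = 0"
    show "p_parabolic K lam mu p"
      unfolding p_parabolic_def
    proof (intro allI impI)
      fix S assume "compactin (tree_top K lam) S"
      then obtain m where "S \<subseteq> ball_n K m"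
        by (rule compactin_subset_ball_n)
      then show "capacity K lam mu p S = 0"
        using capacity_mono[of S "ball_n K m" K lam mu p] balls by simp
    qed
  qed
qed

end
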